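(* Let $X$ be a proper real random variable with $\mathrm{supp}(X)=\mathbb R$ and a bounded unimodal density $f_X$. Each of the following conditions implies that $X$ has a regular tail: (i) $f_X(x)=O(|x|^{-a})$ and $f_X(x)=\Omega(|x|^{-b})$ as $|x|\to\infty$, for some $b\ge a>1$; (ii) $f_X(x)=O(e^{-b|x|^a})$ and $f_X(x)=\Omega(e^{-b|x|^a})$ as $|x|\to\infty$, for some $a\ge 1$, $b>0$.
   Context: A proper (absolutely continuous) real random variable $X$ with density $f_X$ and c.d.f. $F_X$ is said to have a regular tail if there exist $\gamma\in(0,\tfrac12]$ and positive constants $c_0,c_1,\alpha_0,\alpha_1$ such that $c_0 f_X^{\alpha_0}(x)\le \min(F_X(x),1-F_X(x))\le c_1 f_X^{\alpha_1}(x)$ for every $x\in\mathrm{supp}(X)$ satisfying $\min(F_X(x),1-F_X(x))\le\gamma$. *)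

theory Defs
  imports "HOL-Probability.Probability" "HOL-Library.Landau_Symbols"
begin

abbreviation law :: "'a measure \<Rightarrow> ('a \<Rightarrow> real) \<Rightarrow> real measure" where
  "law M X \<equiv> distr M borel X"

definition rv_support :: "'a measure \<Rightarrow> ('a \<Rightarrow> real) \<Rightarrow> real set" where
  "rv_support M X = {x. \<forall>U. open U \<and> x \<in> U \<longrightarrow> 0 < measure (law M X) U}"

definition unimodal :: "(real \<Rightarrow> real) \<Rightarrow> bool" where
  "unimodal f \<longleftrightarrow> (\<exists>m. mono_on {..m} f \<and> antimono_on {m..} f)"

text \<open>Regular tail of X with (chosen version of the) density f.\<close>
definition regular_tail :: "'a measure \<Rightarrow> ('a \<Rightarrow> real) \<Rightarrow> (real \<Rightarrow> real) \<Rightarrow> bool" where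
  "regular_tail M X f \<longleftrightarrow>
     (\<exists>\<gamma> c0 c1 \<alpha>0 \<alpha>1::real. 0 < \<gamma> \<and> \<gamma> \<le> 1/2 \<and> 0 < c0 \<and> 0 < c1 \<and> 0 < \<alpha>0 \<and> 0 < \<alpha>1 \<and>
        (\<forall>x \<in> rv_support M X.
           min (cdf (law M X) x) (1 - cdf (law M X) x) \<le> \<gamma> \<longrightarrow>
             c0 * f x powr \<alpha>0 \<le> min (cdf (law M X) x) (1 - cdf (law M X) x) \<and>
             min (cdf (law M X) x) (1 - cdf (law M X) x) \<le> c1 * f x powr \<alpha>1))"

end

theory Submission
  imports Defs
begin

text \<open>
  Write \<open>T g x\<close> for the integral of a nonnegative function \<open>g\<close> over \<open>(x, \<infinity>)\<close>.
  If \<open>f\<close> is the density of \<open>X\<close> with cdf \<open>F\<close>, then \<open>1 - F x = T f x\<close> and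
  \<open>F x = T (f \<circ> uminus) (-x)\<close>, so both tails of \<open>X\<close> are right tails of \<open>f\<close> or of its reflection.  Upper bounds on \<open>T g\<close> come from integrating a
  majorant of \<open>g\<close> (a power \<open>t^-a\<close>, resp. an exponential \<open>e^-\<lambda>t\<close> using \<open>t^a \<ge> x^(a-1) t\<close>);
  lower bounds from the mass of \<open>g\<close> on \<open>(x, x+1]\<close>, where the minorant is at least its value
  at \<open>2x\<close>.  Comparing with the two-sided bound on \<open>g(x)\<close> itself gives the exponents
  \<open>b/a, (a-1)/b\<close> in the polynomial case and \<open>2^a, 1\<close> in the exponential case.
  Finally, full support makes \<open>F(-R) > 0\<close> and \<open>F(R) < 1\<close>, so once \<open>min(F, 1-F)\<close> is below
  a small threshold \<open>\<gamma>\<close> we have \<open>|x| \<ge> R\<close> and the right-tail estimates apply.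
\<close>

definition right_tail :: "(real \<Rightarrow> real) \<Rightarrow> real \<Rightarrow> ennreal" where
  "right_tail g x = (\<integral>\<^sup>+t. ennreal (g t) * indicator {x<..} t \<partial>lborel)"

definition regular_right_tail :: "(real \<Rightarrow> real) \<Rightarrow> real \<Rightarrow> real \<Rightarrow> bool" where
  "regular_right_tail g \<alpha>0 \<alpha>1 \<longleftrightarrow> (\<exists>R c0 c1. 0 < c0 \<and> 0 < c1 \<and> (\<forall>x\<ge>R.
     ennreal (c0 * g x powr \<alpha>0) \<le> right_tail g x \<and> right_tail g x \<le> ennreal (c1 * g x powr \<alpha>1)))"

lemma right_tail_le_integral:
  fixes g h :: "real \<Rightarrow> real"
  assumes int: "(h has_integral I) {x..}" and h0: "\<And>t. x \<le> t \<Longrightarrow> 0 \<le> h t"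
    and gh: "\<And>t. x < t \<Longrightarrow> g t \<le> h t"
  shows "right_tail g x \<le> ennreal I"
proof -
  have "right_tail g x \<le> (\<integral>\<^sup>+t. ennreal (h t) * indicator {x..} t \<partial>lborel)"
    unfolding right_tail_def
    by (intro nn_integral_mono) (auto simp: indicator_def gh intro!: ennreal_leI)
  also have "\<dots> = ennreal I"
    using int h0 by (intro nn_integral_has_integral_lebesgue') auto
  finally show ?thesis .
qed

lemma right_tail_ge_local_mass:
  fixes g :: "real \<Rightarrow> real"
  assumes m: "0 \<le> m" and gm: "\<And>t. x < t \<Longrightarrow> t \<le> x + 1 \<Longrightarrow> m \<le> g t"
  shows "ennreal m \<le> right_tail g x"
proof -
  have "ennreal m = (\<integral>\<^sup>+t. ennreal m * indicator {x<..x+1} t \<partial>lborel)"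
    by (simp add: nn_integral_cmult_indicator)
  also have "\<dots> \<le> right_tail g x"
    unfolding right_tail_def
    by (intro nn_integral_mono) (auto simp: indicator_def gm intro!: ennreal_leI)
  finally show ?thesis .
qed

text \<open>Polynomial upper bound: if \<open>g t \<le> C t^-a\<close> beyond \<open>x\<close> and \<open>c x^-b \<le> g x\<close>, then the tail
  \<open>\<le> C x^(1-a)/(a-1)\<close> is controlled by \<open>g(x)^((a-1)/b)\<close>, since \<open>x^(1-a) = (x^-b)^((a-1)/b)\<close>.\<close>
lemma poly_right_tail_upper:
  fixes g :: "real \<Rightarrow> real"
  assumes a: "1 < a" and b: "0 < b" and C: "0 < C" and c: "0 < c" and x: "1 \<le> x"
    and up: "\<And>t. x \<le> t \<Longrightarrow> g t \<le> C * t powr (-a)" and low: "c * x powr (-b) \<le> g x"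
  shows "right_tail g x \<le> ennreal (C / ((a-1) * c powr ((a-1)/b)) * g x powr ((a-1)/b))"
proof -
  have "((\<lambda>t. C * t powr (-a)) has_integral C * (x powr (1-a) / (a-1))) {x..}"
  proof -
    have "-(x powr (-a+1)) / (-a+1) = x powr (1-a) / (a-1)"
      using a by (simp add: field_simps)
    then show ?thesis
      using has_integral_powr_to_inf[of "-a" x] x a by (intro has_integral_mult_right) auto
  qed
  then have "right_tail g x \<le> ennreal (C * (x powr (1-a) / (a-1)))"
    using x C up by (intro right_tail_le_integral) auto
  also have "C * (x powr (1-a) / (a-1)) \<le> C / ((a-1) * c powr ((a-1)/b)) * g x powr ((a-1)/b)"
  proof -
    have "-b * ((a-1)/b) = 1 - a" using b by (simp add: field_simps)
    then have "c powr ((a-1)/b) * x powr (1-a) = (c * x powr (-b)) powr ((a-1)/b)"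
      using c x by (simp add: powr_mult powr_powr)
    also have "\<dots> \<le> g x powr ((a-1)/b)"
      using low a b c by (intro powr_mono2) auto
    finally have "c powr ((a-1)/b) * x powr (1-a) \<le> g x powr ((a-1)/b)" .
    moreover have "0 \<le> C / ((a-1) * c powr ((a-1)/b))" using a C by simp
    ultimately have "C / ((a-1) * c powr ((a-1)/b)) * (c powr ((a-1)/b) * x powr (1-a))
        \<le> C / ((a-1) * c powr ((a-1)/b)) * g x powr ((a-1)/b)"
      by (rule mult_left_mono)
    moreover have "C / ((a-1) * c powr ((a-1)/b)) * (c powr ((a-1)/b) * x powr (1-a))
        = C * (x powr (1-a) / (a-1))"
      using a c by (simp add: field_simps)
    ultimately show ?thesis by simp
  qed
  finally show ?thesis by (simp add: ennreal_leI)
qed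

text \<open>Polynomial lower bound: if \<open>c t^-b \<le> g t\<close> beyond \<open>x\<close> and \<open>g x \<le> C x^-a\<close>, the mass on
  \<open>(x, x+1]\<close> is at least \<open>c (2x)^-b\<close>, which dominates a multiple of \<open>g(x)^(b/a)\<close>.\<close>
lemma poly_right_tail_lower:
  fixes g :: "real \<Rightarrow> real"
  assumes g0: "0 \<le> g x" and a: "0 < a" and b: "0 < b" and C: "0 < C" and c: "0 < c" and x: "1 \<le> x"
    and up: "g x \<le> C * x powr (-a)" and low: "\<And>t. x \<le> t \<Longrightarrow> c * t powr (-b) \<le> g t"
  shows "ennreal (c * 2 powr (-b) / C powr (b/a) * g x powr (b/a)) \<le> right_tail g x"
proof -
  have "c * 2 powr (-b) / C powr (b/a) * g x powr (b/a)
      \<le> c * 2 powr (-b) / C powr (b/a) * (C * x powr (-a)) powr (b/a)"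
    using up g0 a b c C by (intro mult_left_mono powr_mono2) auto
  also have "\<dots> = c * (2*x) powr (-b)"
    using C x a by (simp add: powr_mult powr_powr field_simps)
  finally have "ennreal (c * 2 powr (-b) / C powr (b/a) * g x powr (b/a)) \<le> ennreal (c * (2*x) powr (-b))"
    by (rule ennreal_leI)
  also have "\<dots> \<le> right_tail g x"
  proof (rule right_tail_ge_local_mass)
    fix t assume t: "x < t" "t \<le> x + 1"
    have "c * (2*x) powr (-b) \<le> c * t powr (-b)"
      using t x b c by (intro mult_left_mono powr_mono2') auto
    also have "\<dots> \<le> g t" using low t by simp
    finally show "c * (2*x) powr (-b) \<le> g t" .
  qed (use c in simp)
  finally show ?thesis .
qed

lemma poly_right_tail_regular:
  fixes g :: "real \<Rightarrow> real"
  assumes g0: "\<And>t. 0 \<le> g t" and a: "1 < a" and ab: "a \<le> b" and C: "0 < C" and c: "0 < c"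
    and R: "1 \<le> R"
    and up: "\<And>t. R \<le> t \<Longrightarrow> g t \<le> C * t powr (-a)"
    and low: "\<And>t. R \<le> t \<Longrightarrow> c * t powr (-b) \<le> g t"
  shows "regular_right_tail g (b/a) ((a-1)/b)"
  unfolding regular_right_tail_def
proof (intro exI conjI allI impI)
  have b: "0 < b" using a ab by simp
  show "0 < c * 2 powr (-b) / C powr (b/a)" "0 < C / ((a-1) * c powr ((a-1)/b))"
    using c C a by simp_all
  fix x assume x: "R \<le> x"
  then have x1: "1 \<le> x" using R by simp
  have up_x: "\<And>t. x \<le> t \<Longrightarrow> g t \<le> C * t powr (-a)"
    and low_x: "\<And>t. x \<le> t \<Longrightarrow> c * t powr (-b) \<le> g t" using up low x by auto
  show "ennreal (c * 2 powr (-b) / C powr (b/a) * g x powr (b/a)) \<le> right_tail g x"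
    using poly_right_tail_lower[OF g0[of x] _ b C c x1 up_x[OF order_refl] low_x] a by simp
  show "right_tail g x \<le> ennreal (C / ((a-1) * c powr ((a-1)/b)) * g x powr ((a-1)/b))"
    by (rule poly_right_tail_upper[OF a b C c x1 up_x low_x[OF order_refl]])
qed

text \<open>Exponential upper bound: for \<open>t \<ge> x \<ge> 1\<close> we have \<open>t^a \<ge> x^(a-1) t\<close>, so the tail is
  dominated by an exponential integral with rate \<open>r = b x^(a-1) \<ge> b\<close>, of value \<open>e^(-b x^a)/r\<close>.\<close>
lemma exp_right_tail_upper:
  fixes g :: "real \<Rightarrow> real"
  assumes a: "1 \<le> a" and b: "0 < b" and C: "0 < C" and c: "0 < c" and x: "1 \<le> x"
    and up: "\<And>t. x \<le> t \<Longrightarrow> g t \<le> C * exp (- b * t powr a)"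
    and low: "c * exp (- b * x powr a) \<le> g x"
  shows "right_tail g x \<le> ennreal (C / (b * c) * g x powr 1)"
proof -
  define r where "r = b * x powr (a-1)"
  have rate: "b \<le> r" "r * x = b * x powr a"
    using x a b by (auto simp: r_def powr_add[of x "a-1" 1, simplified] ge_one_powr_ge_zero)
  have "((\<lambda>t. C * exp (- r * t)) has_integral C * (exp (- r * x) / r)) {x..}"
    using has_integral_exp_minus_to_infinity[of r x] rate b by (intro has_integral_mult_right) auto
  moreover have "g t \<le> C * exp (- r * t)" if t: "x < t" for t
  proof -
    have "x powr (a-1) * t \<le> t powr (a-1) * t"
      using t x a by (intro mult_right_mono powr_mono2) auto
    also have "\<dots> = t powr a" using t x by (simp add: powr_add[of t "a-1" 1, simplified])
    finally have "- b * t powr a \<le> - r * t" using b by (simp add: r_def)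
    then have "C * exp (- b * t powr a) \<le> C * exp (- r * t)" using C by simp
    then show ?thesis using up[of t] t by simp
  qed
  ultimately have "right_tail g x \<le> ennreal (C * (exp (- r * x) / r))"
    using C by (intro right_tail_le_integral) auto
  also have "C * (exp (- r * x) / r) \<le> C / (b * c) * (c * exp (- b * x powr a))"
    using rate b c C by (simp add: field_simps frac_le)
  also have "\<dots> \<le> C / (b * c) * g x powr 1"
  proof -
    have "0 \<le> g x" using order_trans[OF _ low, of 0] c by simp
    then show ?thesis using low b c C by (intro mult_left_mono) auto
  qed
  finally show ?thesis by (simp add: ennreal_leI)
qed

text \<open>Exponential lower bound: on \<open>(x, x+1]\<close> a minorant \<open>c e^(-b t^a)\<close> is at least
  \<open>c e^(-b (2x)^a) = c (e^(-b x^a))^(2^a)\<close>, which dominates a multiple of \<open>g(x)^(2^a)\<close>.\<close>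
lemma exp_right_tail_lower:
  fixes g :: "real \<Rightarrow> real"
  assumes g0: "0 \<le> g x" and a: "0 \<le> a" and b: "0 < b" and C: "0 < C" and c: "0 < c" and x: "1 \<le> x"
    and up: "g x \<le> C * exp (- b * x powr a)"
    and low: "\<And>t. x \<le> t \<Longrightarrow> c * exp (- b * t powr a) \<le> g t"
  shows "ennreal (c / C powr (2 powr a) * g x powr (2 powr a)) \<le> right_tail g x"
proof -
  have "c / C powr (2 powr a) * g x powr (2 powr a)
      \<le> c / C powr (2 powr a) * (C * exp (- b * x powr a)) powr (2 powr a)"
    using up g0 c C by (intro mult_left_mono powr_mono2) auto
  also have "\<dots> = c * exp (- b * (2*x) powr a)"
    using C x by (simp add: powr_mult exp_powr_real field_simps)
  finally have "ennreal (c / C powr (2 powr a) * g x powr (2 powr a)) \<le> ennreal (c * exp (- b * (2*x) powr a))"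
    by (rule ennreal_leI)
  also have "\<dots> \<le> right_tail g x"
  proof (rule right_tail_ge_local_mass)
    fix t assume t: "x < t" "t \<le> x + 1"
    have "t powr a \<le> (2*x) powr a" using t x a by (intro powr_mono2) auto
    then have "c * exp (- b * (2*x) powr a) \<le> c * exp (- b * t powr a)" using b c by simp
    also have "\<dots> \<le> g t" using low t by simp
    finally show "c * exp (- b * (2*x) powr a) \<le> g t" .
  qed (use c in simp)
  finally show ?thesis .
qed

lemma exp_right_tail_regular:
  fixes g :: "real \<Rightarrow> real"
  assumes g0: "\<And>t. 0 \<le> g t" and a: "1 \<le> a" and b: "0 < b" and C: "0 < C" and c: "0 < c"
    and R: "1 \<le> R"
    and up: "\<And>t. R \<le> t \<Longrightarrow> g t \<le> C * exp (- b * t powr a)"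
    and low: "\<And>t. R \<le> t \<Longrightarrow> c * exp (- b * t powr a) \<le> g t"
  shows "regular_right_tail g (2 powr a) 1"
  unfolding regular_right_tail_def
proof (intro exI conjI allI impI)
  show "0 < c / C powr (2 powr a)" "0 < C / (b * c)" using c C b by simp_all
  fix x assume x: "R \<le> x"
  then have x1: "1 \<le> x" using R by simp
  have up_x: "\<And>t. x \<le> t \<Longrightarrow> g t \<le> C * exp (- b * t powr a)"
    and low_x: "\<And>t. x \<le> t \<Longrightarrow> c * exp (- b * t powr a) \<le> g t" using up low x by auto
  show "ennreal (c / C powr (2 powr a) * g x powr (2 powr a)) \<le> right_tail g x"
    using exp_right_tail_lower[OF g0[of x] _ b C c x1 up_x[OF order_refl] low_x] a by simp
  show "right_tail g x \<le> ennreal (C / (b * c) * g x powr 1)"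
    by (rule exp_right_tail_upper[OF a b C c x1 up_x low_x[OF order_refl]])
qed

lemma (in real_distribution) one_minus_cdf: "1 - cdf M x = measure M {x<..}"
proof -
  have "UNIV - {..x} = {x<..}" by auto
  then show ?thesis using prob_compl[of "{..x}"] by (simp add: cdf_def)
qed

lemma cdf_as_right_tails:
  fixes M :: "'a measure" and X :: "'a \<Rightarrow> real" and f :: "real \<Rightarrow> real"
  assumes "prob_space M" and Xm: "X \<in> borel_measurable M" and [measurable]: "f \<in> borel_measurable borel"
    and D: "distributed M lborel X (\<lambda>x. ennreal (f x))"
  shows "ennreal (1 - cdf (law M X) x) = right_tail f x"
    and "ennreal (cdf (law M X) x) = right_tail (\<lambda>t. f (-t)) (-x)"
proof -
  interpret M: prob_space M by fact
  interpret L: real_distribution "law M X" using Xm by simp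
  have "law M X = distr M lborel X" by (rule distr_cong) auto
  then have L: "law M X = density lborel (\<lambda>x. ennreal (f x))"
    using distributed_distr_eq_density[OF D] by simp
  have emL: "emeasure (law M X) A = (\<integral>\<^sup>+t. ennreal (f t) * indicator A t \<partial>lborel)"
    if "A \<in> sets borel" for A
    unfolding L using that by (subst emeasure_density) auto
  show "ennreal (1 - cdf (law M X) x) = right_tail f x"
    by (simp add: L.one_minus_cdf L.emeasure_eq_measure[symmetric] emL right_tail_def)
  \<comment> \<open>The left tail is the right tail of the reflected density; the endpoint is a null set.\<close>
  have "ennreal (cdf (law M X) x) = (\<integral>\<^sup>+t. ennreal (f t) * indicator {..x} t \<partial>lborel)"
    by (simp add: cdf_def L.emeasure_eq_measure[symmetric] emL)
  also have "\<dots> = (\<integral>\<^sup>+t. ennreal (f t) * indicator {..x} t \<partial>distr lborel borel uminus)"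
    by (simp add: lborel_distr_uminus)
  also have "\<dots> = (\<integral>\<^sup>+t. ennreal (f (-t)) * indicator {-x..} t \<partial>lborel)"
    by (subst nn_integral_distr) (auto intro!: nn_integral_cong simp: indicator_def)
  also have "\<dots> = right_tail (\<lambda>t. f (-t)) (-x)"
    unfolding right_tail_def
    by (intro nn_integral_cong_AE eventually_mono[OF AE_lborel_singleton[of "-x"]])
       (auto simp: indicator_def)
  finally show "ennreal (cdf (law M X) x) = right_tail (\<lambda>t. f (-t)) (-x)" .
qed

lemma cdf_law_mono:
  fixes M :: "'a measure" and X :: "'a \<Rightarrow> real"
  assumes "prob_space M" and Xm: "X \<in> borel_measurable M"
  shows "mono (cdf (law M X))"
proof -
  interpret M: prob_space M by fact
  interpret L: real_distribution "law M X" using Xm by simp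
  show ?thesis by (auto intro: monoI L.cdf_nondecreasing)
qed

text \<open>With full support, every open ray has positive probability, so \<open>0 < F x < 1\<close>.\<close>
lemma cdf_strictly_between_of_full_support:
  fixes M :: "'a measure" and X :: "'a \<Rightarrow> real"
  assumes "prob_space M" and Xm: "X \<in> borel_measurable M" and S: "rv_support M X = UNIV"
  shows "0 < cdf (law M X) x" and "cdf (law M X) x < 1"
proof -
  interpret M: prob_space M by fact
  interpret L: real_distribution "law M X" using Xm by simp
  have pos: "0 < measure (law M X) U" if "open U" "y \<in> U" for U y
    using S that unfolding rv_support_def by auto
  have "0 < measure (law M X) {..<x}" by (rule pos[of _ "x - 1"]) auto
  also have "\<dots> \<le> measure (law M X) {..x}" by (rule L.finite_measure_mono) auto
  finally show "0 < cdf (law M X) x" by (simp add: cdf_def)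
  have "0 < measure (law M X) {x<..}" by (rule pos[of _ "x + 1"]) auto
  then show "cdf (law M X) x < 1" by (simp add: L.one_minus_cdf[symmetric])
qed

lemma regular_right_tailE:
  assumes "regular_right_tail g \<alpha>0 \<alpha>1"
  obtains R c0 c1 where "0 < c0" "0 < c1"
    and "\<And>x s. R \<le> x \<Longrightarrow> 0 \<le> s \<Longrightarrow> ennreal s = right_tail g x \<Longrightarrow>
           c0 * g x powr \<alpha>0 \<le> s \<and> s \<le> c1 * g x powr \<alpha>1"
proof -
  obtain R c0 c1 where c: "0 < c0" "0 < c1" and bounds: "\<And>x. R \<le> x \<Longrightarrow>
      ennreal (c0 * g x powr \<alpha>0) \<le> right_tail g x \<and> right_tail g x \<le> ennreal (c1 * g x powr \<alpha>1)"
    using assms unfolding regular_right_tail_def by blast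
  show ?thesis
  proof (rule that[OF c])
    fix x s assume x: "R \<le> x" and s: "0 \<le> s" "ennreal s = right_tail g x"
    have "0 \<le> c1 * g x powr \<alpha>1" using c by simp
    then show "c0 * g x powr \<alpha>0 \<le> s \<and> s \<le> c1 * g x powr \<alpha>1"
      using bounds[OF x] s(1) unfolding s(2)[symmetric] by (simp add: ennreal_le_iff)
  qed
qed

lemma min_cdf_small_location:
  fixes F :: "real \<Rightarrow> real"
  assumes F: "mono F" and R: "0 \<le> R" and left: "\<gamma> < F (-R)" and right: "\<gamma> < 1 - F R"
    and small: "min (F x) (1 - F x) \<le> \<gamma>"
  shows "(R \<le> x \<and> min (F x) (1 - F x) = 1 - F x) \<or> (x \<le> -R \<and> min (F x) (1 - F x) = F x)"
proof -
  have "F (-R) \<le> F x" if "-R \<le> x" using F that by (rule monoD)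
  moreover have "F x \<le> F R" if "x \<le> R" using F that by (rule monoD)
  ultimately show ?thesis using R left right small by (cases "R \<le> x"; cases "x \<le> -R") auto
qed

lemma regular_right_tails_common_constants:
  fixes g h :: "real \<Rightarrow> real"
  assumes "regular_right_tail g \<alpha>0 \<alpha>1" and "regular_right_tail h \<alpha>0 \<alpha>1"
  obtains R c0 c1 where "0 \<le> R" "0 < c0" "0 < c1"
    and "\<And>x s. R \<le> x \<Longrightarrow> 0 \<le> s \<Longrightarrow> ennreal s = right_tail g x \<Longrightarrow>
           c0 * g x powr \<alpha>0 \<le> s \<and> s \<le> c1 * g x powr \<alpha>1"
    and "\<And>x s. R \<le> x \<Longrightarrow> 0 \<le> s \<Longrightarrow> ennreal s = right_tail h x \<Longrightarrow>
           c0 * h x powr \<alpha>0 \<le> s \<and> s \<le> c1 * h x powr \<alpha>1"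
proof -
  obtain R1 c0 c1 where c: "0 < c0" "0 < c1" and g_bounds: "\<And>x s. R1 \<le> x \<Longrightarrow> 0 \<le> s \<Longrightarrow>
      ennreal s = right_tail g x \<Longrightarrow> c0 * g x powr \<alpha>0 \<le> s \<and> s \<le> c1 * g x powr \<alpha>1"
    using assms(1) by (elim regular_right_tailE) blast
  obtain R2 d0 d1 where d: "0 < d0" "0 < d1" and h_bounds: "\<And>x s. R2 \<le> x \<Longrightarrow> 0 \<le> s \<Longrightarrow>
      ennreal s = right_tail h x \<Longrightarrow> d0 * h x powr \<alpha>0 \<le> s \<and> s \<le> d1 * h x powr \<alpha>1"
    using assms(2) by (elim regular_right_tailE) blast
  have weaken: "min c0 d0 * p \<le> s \<and> s \<le> max c1 d1 * q"
    if "k0 * p \<le> s \<and> s \<le> k1 * q" "min c0 d0 \<le> k0" "k1 \<le> max c1 d1" "0 \<le> p" "0 \<le> q"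
    for k0 k1 p q s :: real
    using that mult_right_mono[of "min c0 d0" k0 p] mult_right_mono[of k1 "max c1 d1" q] by linarith
  show ?thesis
  proof (rule that[of "max 0 (max R1 R2)" "min c0 d0" "max c1 d1"])
    fix x s :: real assume "max 0 (max R1 R2) \<le> x" "0 \<le> s"
    then have "R1 \<le> x" "R2 \<le> x" "0 \<le> s" by auto
    then show "ennreal s = right_tail g x \<Longrightarrow>
        min c0 d0 * g x powr \<alpha>0 \<le> s \<and> s \<le> max c1 d1 * g x powr \<alpha>1"
      and "ennreal s = right_tail h x \<Longrightarrow>
        min c0 d0 * h x powr \<alpha>0 \<le> s \<and> s \<le> max c1 d1 * h x powr \<alpha>1"
      using weaken[OF g_bounds[of x s]] weaken[OF h_bounds[of x s]] by auto
  qed (use c d in auto)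
qed

lemma regular_tail_from_right_tails:
  fixes M :: "'a measure" and X :: "'a \<Rightarrow> real" and f :: "real \<Rightarrow> real"
  assumes P: "prob_space M" and Xm: "X \<in> borel_measurable M" and fm: "f \<in> borel_measurable borel"
    and D: "distributed M lborel X (\<lambda>x. ennreal (f x))" and S: "rv_support M X = UNIV"
    and \<alpha>: "0 < \<alpha>0" "0 < \<alpha>1"
    and right: "regular_right_tail f \<alpha>0 \<alpha>1" and left: "regular_right_tail (\<lambda>t. f (-t)) \<alpha>0 \<alpha>1"
  shows "regular_tail M X f"
proof -
  let ?F = "cdf (law M X)"
  obtain R c0 c1 where R: "0 \<le> R" and c: "0 < c0" "0 < c1"
    and right_bounds: "\<And>x s. R \<le> x \<Longrightarrow> 0 \<le> s \<Longrightarrow> ennreal s = right_tail f x \<Longrightarrow>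
           c0 * f x powr \<alpha>0 \<le> s \<and> s \<le> c1 * f x powr \<alpha>1"
    and left_bounds: "\<And>x s. R \<le> x \<Longrightarrow> 0 \<le> s \<Longrightarrow> ennreal s = right_tail (\<lambda>t. f (-t)) x \<Longrightarrow>
           c0 * f (-x) powr \<alpha>0 \<le> s \<and> s \<le> c1 * f (-x) powr \<alpha>1"
    using right left by (rule regular_right_tails_common_constants) blast
  \<comment> \<open>Full support keeps both tails at \<open>\<plusminus>R\<close> positive, so a small enough \<open>\<gamma>\<close> forces \<open>|x| \<ge> R\<close>.\<close>
  define \<gamma> where "\<gamma> = min (1/2) (min (?F (-R) / 2) ((1 - ?F R) / 2))"
  have \<gamma>: "0 < \<gamma>" "\<gamma> \<le> 1/2" "\<gamma> < ?F (-R)" "\<gamma> < 1 - ?F R"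
    using cdf_strictly_between_of_full_support[OF P Xm S, of R]
      cdf_strictly_between_of_full_support[OF P Xm S, of "-R"]
    unfolding \<gamma>_def by (auto simp: min_def)
  have bounds: "c0 * f x powr \<alpha>0 \<le> min (?F x) (1 - ?F x) \<and> min (?F x) (1 - ?F x) \<le> c1 * f x powr \<alpha>1"
    if small: "min (?F x) (1 - ?F x) \<le> \<gamma>" for x
  proof -
    have F01: "0 \<le> ?F x" "0 \<le> 1 - ?F x"
      using cdf_strictly_between_of_full_support[OF P Xm S, of x] by auto
    from min_cdf_small_location[OF cdf_law_mono[OF P Xm] R \<gamma>(3,4) small]
    consider "R \<le> x" "min (?F x) (1 - ?F x) = 1 - ?F x" | "R \<le> -x" "min (?F x) (1 - ?F x) = ?F x"
      by fastforce
    then show ?thesis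
    proof cases
      case 1
      then show ?thesis
        using right_bounds[OF 1(1) F01(2) cdf_as_right_tails(1)[OF P Xm fm D]] by simp
    next
      case 2
      then show ?thesis
        using left_bounds[OF 2(1) F01(1) cdf_as_right_tails(2)[OF P Xm fm D]] by simp
    qed
  qed
  with \<gamma>(1,2) \<alpha> c show ?thesis
    unfolding regular_tail_def by blast
qed

lemma landau_two_sided_bounds:
  fixes f h k :: "real \<Rightarrow> real"
  assumes "f \<in> O[at_infinity](h)" and "f \<in> \<Omega>[at_infinity](k)"
  obtains C c R where "0 < C" "0 < c" "1 \<le> R"
    and "\<And>x. R \<le> \<bar>x\<bar> \<Longrightarrow> \<bar>f x\<bar> \<le> C * \<bar>h x\<bar>"
    and "\<And>x. R \<le> \<bar>x\<bar> \<Longrightarrow> c * \<bar>k x\<bar> \<le> \<bar>f x\<bar>"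
proof -
  obtain C where C: "0 < C" and "eventually (\<lambda>x. norm (f x) \<le> C * norm (h x)) at_infinity"
    using assms(1) by (elim landau_o.bigE)
  then obtain R1 where R1: "\<And>x. R1 \<le> \<bar>x\<bar> \<Longrightarrow> \<bar>f x\<bar> \<le> C * \<bar>h x\<bar>"
    unfolding eventually_at_infinity by auto
  obtain c where c: "0 < c" and "eventually (\<lambda>x. c * norm (k x) \<le> norm (f x)) at_infinity"
    using assms(2) by (elim landau_omega.bigE)
  then obtain R2 where R2: "\<And>x. R2 \<le> \<bar>x\<bar> \<Longrightarrow> c * \<bar>k x\<bar> \<le> \<bar>f x\<bar>"
    unfolding eventually_at_infinity by auto
  show ?thesis
    by (rule that[OF C c, of "max 1 (max R1 R2)"]) (auto intro: R1 R2)
qed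

theorem mainTheorem2:
  fixes M :: "'a measure" and X :: "'a \<Rightarrow> real" and f :: "real \<Rightarrow> real"
  assumes "prob_space M"
    and "X \<in> borel_measurable M"
    and "\<And>x. 0 \<le> f x"
    and "f \<in> borel_measurable borel"
    and "distributed M lborel X (\<lambda>x. ennreal (f x))"
    and "rv_support M X = UNIV"
    and "\<exists>B. \<forall>x. f x \<le> B"
    and "unimodal f"
    and "(\<exists>a b::real. 1 < a \<and> a \<le> b \<and>
            f \<in> O[at_infinity](\<lambda>x. \<bar>x\<bar> powr (-a)) \<and>
            f \<in> \<Omega>[at_infinity](\<lambda>x. \<bar>x\<bar> powr (-b)))
       \<or> (\<exists>a b::real. 1 \<le> a \<and> 0 < b \<and>
            f \<in> O[at_infinity](\<lambda>x. exp (- b * \<bar>x\<bar> powr a)) \<and>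
            f \<in> \<Omega>[at_infinity](\<lambda>x. exp (- b * \<bar>x\<bar> powr a)))"
  shows "regular_tail M X f"
  \<comment> \<open>In either case, obtain explicit bounds for \<open>|x| \<ge> R\<close>, deduce regular right tails for
     \<open>f\<close> and its reflection, and conclude by the reduction lemma.\<close>
  using assms(9)
proof (elim disjE exE conjE)
  fix a b :: real
  assume a: "1 < a" and ab: "a \<le> b"
    and "f \<in> O[at_infinity](\<lambda>x. \<bar>x\<bar> powr (-a))" "f \<in> \<Omega>[at_infinity](\<lambda>x. \<bar>x\<bar> powr (-b))"
  then obtain C c R where C: "0 < C" "0 < c" "1 \<le> R"
    and up: "\<And>x. R \<le> \<bar>x\<bar> \<Longrightarrow> f x \<le> C * \<bar>x\<bar> powr (-a)"
    and low: "\<And>x. R \<le> \<bar>x\<bar> \<Longrightarrow> c * \<bar>x\<bar> powr (-b) \<le> f x"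
    using assms(3) by (elim landau_two_sided_bounds) auto
  have "regular_right_tail g (b/a) ((a-1)/b)" if g: "g = f \<or> g = (\<lambda>t. f (-t))" for g
  proof (rule poly_right_tail_regular[OF _ a ab C])
    fix t assume "R \<le> t"
    then have "R \<le> \<bar>t\<bar>" "R \<le> \<bar>-t\<bar>" "\<bar>t\<bar> = t" using C(3) by auto
    then show "g t \<le> C * t powr (-a)" "c * t powr (-b) \<le> g t"
      using g up[of t] up[of "-t"] low[of t] low[of "-t"] by auto
  qed (use g assms(3) in auto)
  then show ?thesis
    using assms(1,2,4,5,6) a ab by (intro regular_tail_from_right_tails) auto
next
  fix a b :: real
  assume a: "1 \<le> a" and b: "0 < b"
    and "f \<in> O[at_infinity](\<lambda>x. exp (- b * \<bar>x\<bar> powr a))" "f \<in> \<Omega>[at_infinity](\<lambda>x. exp (- b * \<bar>x\<bar> powr a))"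
  then obtain C c R where C: "0 < C" "0 < c" "1 \<le> R"
    and up: "\<And>x. R \<le> \<bar>x\<bar> \<Longrightarrow> f x \<le> C * exp (- b * \<bar>x\<bar> powr a)"
    and low: "\<And>x. R \<le> \<bar>x\<bar> \<Longrightarrow> c * exp (- b * \<bar>x\<bar> powr a) \<le> f x"
    using assms(3) by (elim landau_two_sided_bounds) auto
  have "regular_right_tail g (2 powr a) 1" if g: "g = f \<or> g = (\<lambda>t. f (-t))" for g
  proof (rule exp_right_tail_regular[OF _ a b C])
    fix t assume "R \<le> t"
    then have "R \<le> \<bar>t\<bar>" "R \<le> \<bar>-t\<bar>" "\<bar>t\<bar> = t" using C(3) by auto
    then show "g t \<le> C * exp (- b * t powr a)" "c * exp (- b * t powr a) \<le> g t"
      using g up[of t] up[of "-t"] low[of t] low[of "-t"] by auto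
  qed (use g assms(3) in auto)
  then show ?thesis
    using assms(1,2,4,5,6) by (intro regular_tail_from_right_tails) auto
qed

end
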